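(* Let $c>0$. Then for all $0<t<\pi/2$, $$\frac{2\int_{-t}^{t}e^{c\sin b}\,db}{\int_{0}^{2\pi}e^{c\cos a}\,da}<\frac{2t}{\pi}.$$
   Context: In the paper $c=\rho rs/(1-\rho^2)$ with $0<\rho<1$, $r,s>0$. *)

theory Defs
  imports "HOL-Analysis.Analysis"
begin

end

theory Submission
  imports Defs
begin

text \<open>Put \<open>g b = exp (c sin b) + exp (- c sin b) = 2 cosh (c sin b)\<close>. Folding the
  symmetric numerator at \<open>0\<close> turns it into the integral of \<open>g\<close> over \<open>[0, t]\<close>, and
  cutting the period into quarters turns the denominator into twice the integral of \<open>g\<close>
  over \<open>[0, \<pi>/2]\<close>. The claim thus says that the mean of \<open>g\<close> over \<open>[0, t]\<close> is
  smaller than its mean over \<open>[0, \<pi>/2]\<close>, which holds because \<open>g\<close> is strictly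
  increasing there.\<close>

lemma integral_le_const_real:
  fixes f :: "real \<Rightarrow> real"
  assumes "f integrable_on {a..b}" "a \<le> b" "\<And>x. x \<in> {a..b} \<Longrightarrow> f x \<le> k"
  shows "integral {a..b} f \<le> (b - a) * k"
proof -
  have "integral {a..b} f \<le> integral {a..b} (\<lambda>_. k)"
    using assms by (intro integral_le) auto
  then show ?thesis
    using assms(2) by (simp add: mult.commute)
qed

lemma integral_ge_const_real:
  fixes f :: "real \<Rightarrow> real"
  assumes "f integrable_on {a..b}" "a \<le> b" "\<And>x. x \<in> {a..b} \<Longrightarrow> k \<le> f x"
  shows "(b - a) * k \<le> integral {a..b} f"
proof -
  have "integral {a..b} (\<lambda>_. k) \<le> integral {a..b} f"
    using assms by (intro integral_le) auto
  then show ?thesis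
    using assms(2) by (simp add: mult.commute)
qed

lemma strict_mono_on_integral_mean_less:
  fixes f :: "real \<Rightarrow> real"
  assumes mono: "strict_mono_on {a..b} f" and cont: "continuous_on {a..b} f"
    and "a < t" "t < b"
  shows "(b - a) * integral {a..t} f < (t - a) * integral {a..b} f"
proof -
  \<comment> \<open>Strictness comes from the half \<open>[m, b]\<close> of \<open>[t, b]\<close>, where \<open>f \<ge> f m > f t\<close>.\<close>
  define m where "m = (t + b) / 2"
  have m: "t < m" "m < b"
    using \<open>t < b\<close> by (auto simp: m_def)
  have int: "f integrable_on {x..y}" if "a \<le> x" "y \<le> b" for x y
    using that by (intro integrable_continuous_real continuous_on_subset[OF cont]) auto
  have le: "f x \<le> f y" if "a \<le> x" "x \<le> y" "y \<le> b" for x y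
    using that strict_mono_on_leD[OF mono] by auto
  have upper: "integral {a..t} f \<le> (t - a) * f t"
    using \<open>a < t\<close> m by (intro integral_le_const_real int le) auto
  have lower1: "(m - t) * f t \<le> integral {t..m} f"
    using \<open>a < t\<close> m by (intro integral_ge_const_real int le) auto
  have lower2: "(b - m) * f m \<le> integral {m..b} f"
    using \<open>a < t\<close> m by (intro integral_ge_const_real int le) auto
  have "f t < f m"
    using \<open>a < t\<close> m by (intro strict_mono_onD[OF mono]) auto
  have split: "integral {a..b} f = integral {a..t} f + integral {t..m} f + integral {m..b} f"
    using \<open>a < t\<close> m int Henstock_Kurzweil_Integration.integral_combine[of a t b f]
      Henstock_Kurzweil_Integration.integral_combine[of t m b f]
    by simp
  have "(b - a) * integral {a..t} f
      = (t - a) * integral {a..t} f + (b - t) * integral {a..t} f"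
    by (simp add: algebra_simps)
  also have "\<dots> \<le> (t - a) * integral {a..t} f + (t - a) * ((m - t) * f t + (b - m) * f t)"
    using mult_left_mono[OF upper, of "b - t"] m by (simp add: algebra_simps)
  also have "\<dots> < (t - a) * integral {a..t} f + (t - a) * ((m - t) * f t + (b - m) * f m)"
    using \<open>f t < f m\<close> \<open>a < t\<close> m by (simp add: mult_strict_left_mono)
  also have "\<dots> \<le> (t - a) * integral {a..b} f"
    using lower1 lower2 \<open>a < t\<close> split by (simp add: distrib_left[symmetric])
  finally show ?thesis .
qed

lemma integral_symmetric_interval:
  fixes f :: "real \<Rightarrow> 'a::banach"
  assumes "f integrable_on {-T..T}" "0 \<le> T"
  shows "integral {-T..T} f = integral {0..T} (\<lambda>x. f x + f (- x))"
proof -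
  have int_left: "f integrable_on {-T..0}" and int_right: "f integrable_on {0..T}"
    using assms by (auto intro: integrable_subinterval_real)
  have int_reflected: "(\<lambda>x. f (- x)) integrable_on {0..T}"
    using int_left Henstock_Kurzweil_Integration.integrable_reflect_real[of f 0 "-T"] by simp
  have "integral {-T..T} f = integral {-T..0} f + integral {0..T} f"
    using assms Henstock_Kurzweil_Integration.integral_combine[of "-T" 0 T f] by simp
  also have "integral {-T..0} f = integral {0..T} (\<lambda>x. f (- x))"
    using Henstock_Kurzweil_Integration.integral_reflect_real[of T 0 "\<lambda>x. f (- x)"] by simp
  finally show ?thesis
    using integral_add[OF int_right int_reflected] by (simp add: add.commute)
qed

lemma integral_cos_period:
  fixes h :: "real \<Rightarrow> real"
  assumes cont: "continuous_on UNIV h"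
  shows "integral {0..2 * pi} (\<lambda>a. h (cos a))
       = 2 * integral {0..pi/2} (\<lambda>b. h (sin b) + h (- sin b))"
proof -
  let ?k = "\<lambda>b. h (- sin b)"
  have int: "?k integrable_on {x..y}" for x y
    by (intro integrable_continuous_real continuous_on_compose2[OF cont] continuous_intros) auto
  have "integral {0..2 * pi} (\<lambda>a. h (cos a))
      = integral {0 - pi/2..2 * pi - pi/2} (\<lambda>b. h (cos (b + pi/2)))"
    by (rule integral_shift_real_ivl[symmetric])
  also have "\<dots> = integral {-(pi/2)..3 * pi/2} ?k"
    by (simp add: cos_add)
  also have "\<dots> = integral {-(pi/2)..pi/2} ?k + integral {pi/2..3 * pi/2} ?k"
    using int Henstock_Kurzweil_Integration.integral_combine[of "-(pi/2)" "pi/2" "3 * pi/2" ?k]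
    by simp
  also have "integral {pi/2..3 * pi/2} ?k = integral {-(pi/2)..pi/2} ?k"
  proof -
    have "integral {pi/2..3 * pi/2} ?k = integral {-(3 * pi/2)..-(pi/2)} (\<lambda>b. ?k (- b))"
      by (rule Henstock_Kurzweil_Integration.integral_reflect_real[symmetric])
    also have "\<dots> = integral {-(pi/2) - pi..pi/2 - pi} (\<lambda>b. ?k (pi - (b + pi)))"
      by (simp add: algebra_simps)
    also have "\<dots> = integral {-(pi/2)..pi/2} (\<lambda>b. ?k (pi - b))"
      by (rule integral_shift_real_ivl)
    finally show ?thesis
      by simp
  qed
  also have "integral {-(pi/2)..pi/2} ?k = integral {0..pi/2} (\<lambda>b. h (sin b) + h (- sin b))"
    using integral_symmetric_interval[of ?k "pi/2"] int by (simp add: add.commute)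
  finally show ?thesis
    by simp
qed

lemma strict_mono_on_cosh_mult_sin:
  fixes c :: real
  assumes "c > 0"
  shows "strict_mono_on {0..pi/2} (\<lambda>b. cosh (c * sin b))"
proof (rule strict_mono_onI)
  fix x y :: real
  assume "x \<in> {0..pi/2}" "y \<in> {0..pi/2}" "x < y"
  then have "0 \<le> sin x" "sin x < sin y"
    by (auto intro: sin_ge_zero sin_monotone_2pi)
  then show "cosh (c * sin x) < cosh (c * sin y)"
    using assms by (simp add: cosh_real_nonneg_less_iff)
qed

theorem lemma3p2:
  fixes c t :: real
  assumes "c > 0" and "0 < t" and "t < pi / 2"
  shows "2 * integral {-t..t} (\<lambda>b. exp (c * sin b))
           / integral {0..2 * pi} (\<lambda>a. exp (c * cos a)) < 2 * t / pi"
proof -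
  define g where "g = (\<lambda>b. exp (c * sin b) + exp (- (c * sin b)))"
  have g_cosh: "g = (\<lambda>b. 2 * cosh (c * sin b))"
    by (auto simp: g_def cosh_def)
  have cont: "continuous_on {0..pi/2} g"
    unfolding g_def by (intro continuous_intros)
  have mono: "strict_mono_on {0..pi/2} g"
    using strict_mono_on_cosh_mult_sin[OF \<open>c > 0\<close>] by (auto simp: g_cosh strict_mono_on_def)
  have numerator: "integral {-t..t} (\<lambda>b. exp (c * sin b)) = integral {0..t} g"
    using \<open>0 < t\<close> integral_symmetric_interval[of "\<lambda>b. exp (c * sin b)" t]
    by (simp add: g_def integrable_continuous_real continuous_intros)
  have denominator: "integral {0..2 * pi} (\<lambda>a. exp (c * cos a)) = 2 * integral {0..pi/2} g"
    using integral_cos_period[of "\<lambda>y. exp (c * y)"] by (simp add: g_def continuous_intros)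
  have mean_less: "pi/2 * integral {0..t} g < t * integral {0..pi/2} g"
    using strict_mono_on_integral_mean_less[OF mono cont] assms by simp
  have "g integrable_on {0..t}"
    using \<open>t < pi/2\<close> by (intro integrable_continuous_real continuous_on_subset[OF cont]) auto
  then have "0 \<le> integral {0..t} g"
    by (rule integral_nonneg) (simp add: g_def add_nonneg_nonneg)
  then have "0 \<le> pi/2 * integral {0..t} g"
    by simp
  then have "0 < t * integral {0..pi/2} g"
    using mean_less by linarith
  then have "0 < integral {0..pi/2} g"
    using \<open>0 < t\<close> by (simp add: zero_less_mult_iff)
  then show ?thesis
    using mean_less numerator denominator by (simp add: divide_simps) (simp add: algebra_simps)
qed

end
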